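(* Let $r\ge 2$ and $k\ge 2$ be integers and $n=k\cdot 2^r$. Then there exists an $r$-regular word of length $n$ over a two-letter alphabet.
   Context: For a word $u=u_1\cdots u_m$ over an alphabet $\mathcal A$ with $b$ letters and an integer $r\ge -1$, $u$ is $r$-regular if for every $k=0,1,\dots,r$ the sum $\sum_{1\le t\le m,\ u_t=c} t^k$ is the same for all letters $c\in\mathcal A$ (a letter not occurring contributes $0$). Here $b=2$. *)

theory Defs
  imports Main
begin

definition pos_power_sum :: "'a list \<Rightarrow> 'a \<Rightarrow> nat \<Rightarrow> nat" where
  "pos_power_sum u c k = (\<Sum>t\<in>{t. 1 \<le> t \<and> t \<le> length u \<and> u ! (t - 1) = c}. t ^ k)"

(* u is r-regular over alphabet A (r \<ge> -1, so r is an int): for every k = 0..r,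
   the power sums agree for all letters of A.  u must be a word over A. *)
definition regular_word :: "'a set \<Rightarrow> int \<Rightarrow> 'a list \<Rightarrow> bool" where
  "regular_word A r u \<longleftrightarrow> set u \<subseteq> A \<and>
     (\<forall>k::nat. int k \<le> r \<longrightarrow> (\<forall>c\<in>A. \<forall>d\<in>A. pos_power_sum u c k = pos_power_sum u d k))"

end

theory Submission
  imports Defs
begin

text \<open>Encode a binary word by the signs \<open>\<plusminus>1\<close> of its letters; it is \<open>r\<close>-regular iff its signed
  moments \<open>\<Sum>\<^sub>t \<plusminus>t\<^sup>j\<close> vanish for \<open>j \<le> r\<close>. Shifting a word by \<open>m\<close> positions turns its moment
  of order \<open>j\<close> into a binomial combination of its moments of order \<open>\<le> j\<close>, so concatenation
  preserves vanishing moments, and appending to \<open>u\<close> its complement (Prouhet's doubling)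
  raises the order of vanishing by one: the top-order moments of \<open>u\<close> and of the shifted
  complement cancel, the lower-order terms vanish by hypothesis. Concatenating the
  2-regular words of length 8 and 12 gives 2-regular words of every length \<open>4k\<close>, \<open>k \<ge> 2\<close>,
  and \<open>r - 2\<close> doublings then reach length \<open>k 2\<^sup>r\<close>.\<close>

definition letter_sign :: "bool \<Rightarrow> int" where
  "letter_sign b = (if b then 1 else -1)"

definition signed_moment :: "bool list \<Rightarrow> nat \<Rightarrow> int" where
  "signed_moment u j = (\<Sum>i<length u. letter_sign (u ! i) * (int i + 1) ^ j)"

definition moments_vanish :: "nat \<Rightarrow> bool list \<Rightarrow> bool" where
  "moments_vanish r u \<longleftrightarrow> (\<forall>j\<le>r. signed_moment u j = 0)"

lemma pos_power_sum_eq_sum_lessThan: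
  "pos_power_sum u c k = (\<Sum>i<length u. if u ! i = c then (i + 1) ^ k else 0)"
proof -
  have positions: "{t. 1 \<le> t \<and> t \<le> length u \<and> u ! (t - 1) = c} = Suc ` {i\<in>{..<length u}. u ! i = c}"
  proof (intro set_eqI iffI)
    fix t assume "t \<in> {t. 1 \<le> t \<and> t \<le> length u \<and> u ! (t - 1) = c}"
    then show "t \<in> Suc ` {i\<in>{..<length u}. u ! i = c}"
      by (intro image_eqI[of _ _ "t - 1"]) auto
  qed auto
  have "pos_power_sum u c k = (\<Sum>i\<in>{i\<in>{..<length u}. u ! i = c}. Suc i ^ k)"
    unfolding pos_power_sum_def positions by (simp add: sum.reindex)
  also have "\<dots> = (\<Sum>i<length u. if u ! i = c then (i + 1) ^ k else 0)"
    by (subst sum.inter_filter[symmetric]) auto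
  finally show ?thesis .
qed

lemma signed_moment_eq_pos_power_sum_diff:
  "signed_moment u j = int (pos_power_sum u True j) - int (pos_power_sum u False j)"
proof -
  have "signed_moment u j = (\<Sum>i<length u. int (if u ! i then (i + 1) ^ j else 0)
                                           - int (if \<not> u ! i then (i + 1) ^ j else 0))"
    unfolding signed_moment_def letter_sign_def by (intro sum.cong) (auto simp: add.commute)
  then show ?thesis
    by (simp add: pos_power_sum_eq_sum_lessThan sum_subtractf of_nat_sum)
qed

lemma regular_word_bool_iff_moments_vanish:
  "regular_word (UNIV :: bool set) (int r) u \<longleftrightarrow> moments_vanish r u"
proof -
  have "(\<forall>c d :: bool. pos_power_sum u c j = pos_power_sum u d j)
      \<longleftrightarrow> pos_power_sum u True j = pos_power_sum u False j" for j
    by (metis (full_types))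
  then show ?thesis
    unfolding regular_word_def moments_vanish_def by (auto simp: signed_moment_eq_pos_power_sum_diff)
qed

lemma sum_lessThan_add:
  fixes m n :: nat
  shows "(\<Sum>i<m + n. f i) = (\<Sum>i<m. f i) + (\<Sum>i<n. f (i + m))"
  by (induction n) (auto simp: add.commute add.left_commute)

lemma signed_moment_shift:
  "(\<Sum>i<length v. letter_sign (v ! i) * (int i + 1 + int m) ^ j)
     = (\<Sum>l\<le>j. of_nat (j choose l) * of_nat m ^ (j - l) * signed_moment v l)"
proof -
  have "(\<Sum>i<length v. letter_sign (v ! i) * (int i + 1 + int m) ^ j)
      = (\<Sum>i<length v. \<Sum>l\<le>j. of_nat (j choose l) * of_nat m ^ (j - l)
                                  * (letter_sign (v ! i) * (int i + 1) ^ l))"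
    by (intro sum.cong refl, subst binomial_ring) (simp add: sum_distrib_left ac_simps)
  also have "\<dots> = (\<Sum>l\<le>j. of_nat (j choose l) * of_nat m ^ (j - l) * signed_moment v l)"
    unfolding signed_moment_def by (simp add: sum_distrib_left sum.swap[of _ "{..j}"])
  finally show ?thesis .
qed

lemma signed_moment_append:
  "signed_moment (u @ v) j
     = signed_moment u j + (\<Sum>l\<le>j. of_nat (j choose l) * of_nat (length u) ^ (j - l) * signed_moment v l)"
proof -
  have "signed_moment (u @ v) j
      = signed_moment u j + (\<Sum>i<length v. letter_sign (v ! i) * (int i + 1 + int (length u)) ^ j)"
    unfolding signed_moment_def
    by (simp add: sum_lessThan_add nth_append add.commute add.left_commute)
  then show ?thesis
    by (simp add: signed_moment_shift)
qed

lemma signed_moment_map_Not: "signed_moment (map Not v) j = - signed_moment v j"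
  unfolding signed_moment_def letter_sign_def
  by (simp add: sum_negf[symmetric]) (intro sum.cong; simp)

lemma moments_vanish_append:
  "moments_vanish r u \<Longrightarrow> moments_vanish r v \<Longrightarrow> moments_vanish r (u @ v)"
  unfolding moments_vanish_def by (auto simp: signed_moment_append intro!: sum.neutral)

lemma moments_vanish_append_map_Not:
  assumes "moments_vanish r u"
  shows "moments_vanish (Suc r) (u @ map Not u)"
  unfolding moments_vanish_def
proof (intro allI impI)
  fix j assume "j \<le> Suc r"
  have lower: "(\<Sum>l<j. of_nat (j choose l) * of_nat (length u) ^ (j - l) * signed_moment u l) = 0"
    using assms \<open>j \<le> Suc r\<close> unfolding moments_vanish_def by (intro sum.neutral) auto
  have "{..j} = insert j {..<j}" by auto
  then have "signed_moment (u @ map Not u) j = signed_moment u j - signed_moment u j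
     - (\<Sum>l<j. of_nat (j choose l) * of_nat (length u) ^ (j - l) * signed_moment u l)"
    by (simp add: signed_moment_append signed_moment_map_Not sum_negf[symmetric])
  then show "signed_moment (u @ map Not u) j = 0"
    by (simp add: lower)
qed

lemma moments_vanish_2_by_computation:
  assumes "\<forall>j\<in>{0, 1, 2}. signed_moment u j = 0"
  shows "moments_vanish 2 u"
  using assms unfolding moments_vanish_def by (auto simp: le_Suc_eq numeral_2_eq_2)

abbreviation word8 :: "bool list" where
  "word8 \<equiv> [True, False, False, True, False, True, True, False]"

abbreviation word12 :: "bool list" where
  "word12 \<equiv> [True, False, True, False, False, False, True, True, True, False, True, False]"

lemma moments_vanish_word8: "moments_vanish 2 word8"
  by (rule moments_vanish_2_by_computation)
     (simp add: signed_moment_def letter_sign_def lessThan_nat_numeral)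

lemma moments_vanish_word12: "moments_vanish 2 word12"
  by (rule moments_vanish_2_by_computation)
     (simp add: signed_moment_def letter_sign_def lessThan_nat_numeral)

lemma exists_moments_vanish_2_length_4k:
  "k \<ge> 2 \<Longrightarrow> \<exists>u. length u = 4 * k \<and> moments_vanish 2 u"
proof (induction k rule: less_induct)
  case (less k)
  consider "k = 2" | "k = 3" | "k \<ge> 4"
    using less.prems by linarith
  then show ?case
  proof cases
    case 1
    then show ?thesis using moments_vanish_word8 by (intro exI[of _ word8]) simp
  next
    case 2
    then show ?thesis using moments_vanish_word12 by (intro exI[of _ word12]) simp
  next
    case 3
    then obtain u where "length u = 4 * (k - 2)" "moments_vanish 2 u"
      using less.IH[of "k - 2"] by force
    then show ?thesis
      using \<open>k \<ge> 4\<close> moments_vanish_append[OF _ moments_vanish_word8]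
      by (intro exI[of _ "u @ word8"]) simp
  qed
qed

lemma exists_moments_vanish_length_mult_power2:
  assumes "r \<ge> 2" and "k \<ge> 2"
  shows "\<exists>u. length u = k * 2 ^ r \<and> moments_vanish r u"
  using assms(1)
proof (induction r rule: dec_induct)
  case base
  then show ?case
    using exists_moments_vanish_2_length_4k[OF assms(2)] by (simp add: mult.commute)
next
  case (step r)
  then obtain u where "length u = k * 2 ^ r" "moments_vanish r u" by blast
  then show ?case
    by (intro exI[of _ "u @ map Not u"]) (simp add: moments_vanish_append_map_Not)
qed

theorem mainTheorem11:
  fixes r k n :: nat
  assumes "r \<ge> 2" and "k \<ge> 2" and "n = k * 2 ^ r"
  shows "\<exists>u :: bool list. length u = n \<and> regular_word (UNIV :: bool set) (int r) u"
  using exists_moments_vanish_length_mult_power2[OF assms(1,2)] assms(3)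
  by (simp add: regular_word_bool_iff_moments_vanish)

end
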